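(* The complete local statistics of an integer matrix $M\in\mathrm{Mat}(2,\mathbb{Z})$ depends only on the three invariants $\det(M)$, $\mathrm{trace}(M)$ and $\mathrm{mgcd}(M)$. Two integer matrices with the same triple of these invariants thus have the same local statistics on all lattices $L_n$, $n\in\mathbb{N}$. In particular, they have the same fixed point counts, both locally (the numbers of points of $L_n$ fixed by $M^m$, for all $n,m$) and globally (the numbers of isolated fixed points of $M^m$ on $\mathbb{T}^2$, for all $m$).
   Context: For $M=\begin{pmatrix}a&b\\c&d\end{pmatrix}$, $\mathrm{mgcd}(M)=\gcd(b,c,d-a)\ge0$. $\mathbb{T}^2=\mathbb{R}^2/\mathbb{Z}^2$, with integer matrices acting by multiplication mod $1$, and $L_n=\{(\frac{k}{n},\frac{\ell}{n}):0\le k,\ell<n\}\subset\mathbb{T}^2$. Two integer matrices have the same local statistics on $L_n$ if the directed pseudo-graphs on $L_n$ they induce (vertices the points of $L_n$, a directed edge from $x$ to $Mx$) are isomorphic as graphs. *)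

theory Defs
  imports "HOL-Analysis.Analysis"
begin

(* Integer 2x2 matrices are elements of int^2^2; M$i$j is the (i,j) entry, i,j in {1,2}. *)

definition trace2 :: "int^2^2 \<Rightarrow> int" where
  "trace2 M = M$1$1 + M$2$2"

definition mgcd :: "int^2^2 \<Rightarrow> int" where
  "mgcd M = gcd (M$1$2) (gcd (M$2$1) (M$2$2 - M$1$1))"

primrec matpow :: "int^2^2 \<Rightarrow> nat \<Rightarrow> int^2^2" where
  "matpow M 0 = mat 1"
| "matpow M (Suc m) = M ** matpow M m"

(* Points of T^2 = R^2/Z^2 are represented by their unique representatives in [0,1)^2. *)
definition torus :: "(real \<times> real) set" where
  "torus = {(x, y). 0 \<le> x \<and> x < 1 \<and> 0 \<le> y \<and> y < 1}"

definition tproj :: "real \<times> real \<Rightarrow> real \<times> real" where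
  "tproj p = (frac (fst p), frac (snd p))"

definition tact :: "int^2^2 \<Rightarrow> real \<times> real \<Rightarrow> real \<times> real" where
  "tact M p = tproj (of_int (M$1$1) * fst p + of_int (M$1$2) * snd p,
                     of_int (M$2$1) * fst p + of_int (M$2$2) * snd p)"

definition lattice :: "nat \<Rightarrow> (real \<times> real) set" where
  "lattice n = {(real k / real n, real l / real n) | k l. k < n \<and> l < n}"

definition induced_edges :: "int^2^2 \<Rightarrow> nat \<Rightarrow> ((real \<times> real) \<times> (real \<times> real)) set" where
  "induced_edges M n = {(x, tact M x) | x. x \<in> lattice n}"

definition digraph_iso :: "'a set \<Rightarrow> ('a \<times> 'a) set \<Rightarrow> 'b set \<Rightarrow> ('b \<times> 'b) set \<Rightarrow> bool" where
  "digraph_iso V1 E1 V2 E2 \<longleftrightarrow>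
     (\<exists>f. bij_betw f V1 V2 \<and> (\<forall>x\<in>V1. \<forall>y\<in>V1. (x, y) \<in> E1 \<longleftrightarrow> (f x, f y) \<in> E2))"

definition same_local_statistics :: "int^2^2 \<Rightarrow> int^2^2 \<Rightarrow> nat \<Rightarrow> bool" where
  "same_local_statistics M N n \<longleftrightarrow>
     digraph_iso (lattice n) (induced_edges M n) (lattice n) (induced_edges N n)"

definition local_fix_count :: "int^2^2 \<Rightarrow> nat \<Rightarrow> nat" where
  "local_fix_count M n = card {x \<in> lattice n. tact M x = x}"

(* isolated fixed points of M on T^2 (topology of T^2 via the lift to R^2) *)
definition isolated_fixed_points :: "int^2^2 \<Rightarrow> (real \<times> real) set" where
  "isolated_fixed_points M =
     {x \<in> torus. tact M x = x \<and>
        (\<exists>e>0. \<forall>y. 0 < dist y x \<and> dist y x < e \<longrightarrow> tact M (tproj y) \<noteq> tproj y)}"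

definition global_fix_count :: "int^2^2 \<Rightarrow> nat" where
  "global_fix_count M = card (isolated_fixed_points M)"

end

theory Submission
  imports Defs
begin

text \<open>If \<open>det P\<close> is coprime to \<open>n\<close>, the map \<open>x \<mapsto> P x\<close> permutes \<open>L\<^sub>n\<close>, so \<open>M P = P K\<close> makes it an
  isomorphism from the graph of \<open>K\<close> onto the graph of \<open>M\<close>, and likewise for all powers. For
  \<open>g = mgcd M \<noteq> 0\<close> such a \<open>P\<close> conjugates \<open>M\<close> to \<open>((a, g e), (g, d))\<close>, its determinant being a
  primitive binary quadratic form, which represents values coprime to \<open>n\<close>; two of these normal forms
  with equal trace and determinant differ by a shear. Globally, with \<open>\<delta> = det (M - I)\<close>, the isolated
  fixed points of \<open>M\<close> are exactly the fixed points in \<open>L\<^bsub>|\<delta>|\<^esub>\<close> (none if \<open>\<delta> = 0\<close>), and the trace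
  and determinant of \<open>M\<^sup>m\<close> only depend on those of \<open>M\<close>.\<close>

definition mat2 :: "int \<Rightarrow> int \<Rightarrow> int \<Rightarrow> int \<Rightarrow> int^2^2" where
  "mat2 a b c d = (\<chi> i j. if i = 1 then (if j = 1 then a else b) else (if j = 1 then c else d))"

lemma mat2_nth [simp]:
  "mat2 a b c d $1$1 = a" "mat2 a b c d $1$2 = b" "mat2 a b c d $2$1 = c" "mat2 a b c d $2$2 = d"
  by (simp_all add: mat2_def)

lemma mat1_nth2:
  "(mat 1 :: int^2^2)$1$1 = 1" "(mat 1 :: int^2^2)$1$2 = 0"
  "(mat 1 :: int^2^2)$2$1 = 0" "(mat 1 :: int^2^2)$2$2 = 1"
  by (simp_all add: mat_def)

lemma det_mat2: "det (mat2 a b c d) = a * d - b * c"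
  by (simp add: det_2)

lemma mat2_eq_iff:
  "(A :: int^2^2) = B \<longleftrightarrow> A$1$1 = B$1$1 \<and> A$1$2 = B$1$2 \<and> A$2$1 = B$2$1 \<and> A$2$2 = B$2$2"
  by (auto simp: vec_eq_iff forall_2)

lemma matrix_mult_nth2:
  fixes A B :: "int^2^2"
  shows "(A ** B)$1$1 = A$1$1 * B$1$1 + A$1$2 * B$2$1"
    "(A ** B)$1$2 = A$1$1 * B$1$2 + A$1$2 * B$2$2"
    "(A ** B)$2$1 = A$2$1 * B$1$1 + A$2$2 * B$2$1"
    "(A ** B)$2$2 = A$2$1 * B$1$2 + A$2$2 * B$2$2"
  by (simp_all add: matrix_matrix_mult_def sum_2)

section \<open>The action on the torus and on \<open>L\<^sub>n\<close>\<close>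

definition lin :: "int^2^2 \<Rightarrow> real \<times> real \<Rightarrow> real \<times> real" where
  "lin A p = (of_int (A$1$1) * fst p + of_int (A$1$2) * snd p,
              of_int (A$2$1) * fst p + of_int (A$2$2) * snd p)"

definition integer_point :: "real \<times> real \<Rightarrow> bool" where
  "integer_point p \<longleftrightarrow> fst p \<in> \<int> \<and> snd p \<in> \<int>"

lemma tact_eq_tproj_lin: "tact A p = tproj (lin A p)"
  by (simp add: tact_def lin_def)

lemma lin_diff: "lin A (p - q) = lin A p - lin A q"
  by (simp add: lin_def prod_eq_iff algebra_simps)

lemma lin_add: "lin A (p + q) = lin A p + lin A q"
  by (simp add: lin_def prod_eq_iff algebra_simps)

lemma lin_scaleR: "lin A (c *\<^sub>R p) = c *\<^sub>R lin A p"
  by (simp add: lin_def prod_eq_iff algebra_simps)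

lemma lin_lin: "lin A (lin B p) = lin (A ** B) p"
  by (simp add: lin_def matrix_mult_nth2 algebra_simps)

lemma integer_point_add: "integer_point p \<Longrightarrow> integer_point q \<Longrightarrow> integer_point (p + q)"
  by (simp add: integer_point_def)

lemma integer_point_diff: "integer_point p \<Longrightarrow> integer_point q \<Longrightarrow> integer_point (p - q)"
  by (simp add: integer_point_def)

lemma integer_point_lin: "integer_point p \<Longrightarrow> integer_point (lin A p)"
  by (auto simp: integer_point_def lin_def)

text \<open>Multiplying by the adjugate of \<open>A\<close> clears the denominators of \<open>v\<close>.\<close>
lemma integer_point_det_scaleR:
  assumes "integer_point (lin A v)"
  shows "integer_point (of_int (det A) *\<^sub>R v)"
proof -
  have "of_int (det A) *\<^sub>R v = lin (mat2 (A$2$2) (- A$1$2) (- A$2$1) (A$1$1)) (lin A v)"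
    by (simp add: lin_def det_2 prod_eq_iff algebra_simps)
  then show ?thesis
    using assms integer_point_lin by presburger
qed

lemma integer_point_of_nat_scaleR: "integer_point p \<Longrightarrow> integer_point (real n *\<^sub>R p)"
  by (simp add: integer_point_def)

lemma integer_point_of_int_scaleR_abs:
  "integer_point (of_int k *\<^sub>R v) \<Longrightarrow> integer_point (real (nat \<bar>k\<bar>) *\<^sub>R v)"
  by (cases "k \<ge> 0") (auto simp: integer_point_def)

lemma integer_point_eq_0:
  "integer_point v \<Longrightarrow> \<bar>fst v\<bar> < 1 \<Longrightarrow> \<bar>snd v\<bar> < 1 \<Longrightarrow> v = 0"
  by (simp add: integer_point_def Ints_nonzero_abs_less1 prod_eq_iff)

lemma abs_fst_le_norm: "\<bar>fst v\<bar> \<le> norm (v :: real \<times> real)"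
  by (metis norm_fst_le prod.collapse real_norm_def)

lemma abs_snd_le_norm: "\<bar>snd v\<bar> \<le> norm (v :: real \<times> real)"
  by (metis norm_snd_le prod.collapse real_norm_def)

lemma frac_eq_iff_diff_Ints: "frac x = frac y \<longleftrightarrow> x - y \<in> \<int>"
  by (metis frac_diff_eq frac_diff_zero frac_eq_0_iff)

lemma tproj_eq_iff: "tproj p = tproj q \<longleftrightarrow> integer_point (p - q)"
  by (simp add: tproj_def integer_point_def frac_eq_iff_diff_Ints)

lemma tproj_in_torus: "tproj p \<in> torus"
  by (simp add: tproj_def torus_def frac_lt_1)

lemma tproj_torus: "p \<in> torus \<Longrightarrow> tproj p = p"
  by (auto simp: tproj_def torus_def frac_eq)

lemma tact_in_torus: "tact A p \<in> torus"
  by (simp add: tact_def tproj_in_torus)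

lemma integer_point_tproj_diff: "integer_point (tproj p - p)"
  by (metis tproj_eq_iff tproj_in_torus tproj_torus)

lemma tact_tproj: "tact A (tproj p) = tproj (lin A p)"
  unfolding tact_eq_tproj_lin tproj_eq_iff lin_diff[symmetric]
  by (intro integer_point_lin integer_point_tproj_diff)

lemma tact_tact: "tact A (tact B p) = tact (A ** B) p"
  by (metis tact_eq_tproj_lin tact_tproj lin_lin)

lemma lattice_iff:
  assumes "n \<ge> 1"
  shows "p \<in> lattice n \<longleftrightarrow> p \<in> torus \<and> integer_point (real n *\<^sub>R p)"
proof
  assume "p \<in> lattice n"
  then obtain k l where "p = (real k / real n, real l / real n)" "k < n" "l < n"
    by (auto simp: lattice_def)
  with assms show "p \<in> torus \<and> integer_point (real n *\<^sub>R p)"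
    by (simp add: torus_def integer_point_def)
next
  assume p: "p \<in> torus \<and> integer_point (real n *\<^sub>R p)"
  then obtain k l where kl: "real n * fst p = of_int k" "real n * snd p = of_int l"
    by (auto simp: integer_point_def elim!: Ints_cases)
  have "0 \<le> real n * fst p" "real n * fst p < real n" "0 \<le> real n * snd p" "real n * snd p < real n"
    using p assms by (auto simp: torus_def)
  then have "0 \<le> k" "k < int n" "0 \<le> l" "l < int n"
    unfolding kl by linarith+
  moreover have "p = (real (nat k) / real n, real (nat l) / real n)"
    using kl assms \<open>0 \<le> k\<close> \<open>0 \<le> l\<close> by (simp add: prod_eq_iff field_simps)
  ultimately show "p \<in> lattice n"
    unfolding lattice_def by (intro CollectI exI[of _ "nat k"] exI[of _ "nat l"]) auto
qed

lemma tact_lattice: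
  assumes "n \<ge> 1" "p \<in> lattice n"
  shows "tact A p \<in> lattice n"
proof -
  have "integer_point (real n *\<^sub>R lin A p)"
    using assms lattice_iff integer_point_lin lin_scaleR by metis
  moreover have "integer_point (real n *\<^sub>R (tproj (lin A p) - lin A p))"
    by (intro integer_point_of_nat_scaleR integer_point_tproj_diff)
  ultimately have "integer_point (real n *\<^sub>R tproj (lin A p))"
    using integer_point_add by (fastforce simp: algebra_simps)
  then show ?thesis
    using assms lattice_iff tact_in_torus tact_eq_tproj_lin by metis
qed

lemma finite_lattice: "finite (lattice n)"
proof -
  have "lattice n = (\<lambda>(k, l). (real k / real n, real l / real n)) ` ({..<n} \<times> {..<n})"
    unfolding lattice_def by auto
  then show ?thesis
    by simp
qed

lemma coprime_Ints:
  assumes "coprime d (int n)" "of_int d * u \<in> \<int>" "real n * u \<in> \<int>"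
  shows "(u :: real) \<in> \<int>"
proof -
  obtain s t where "s * d + t * int n = 1"
    using bezout_int[of d "int n"] assms(1) by (auto simp: coprime_iff_gcd_eq_1)
  then have "u = of_int (s * d + t * int n) * u"
    by simp
  also have "\<dots> = of_int s * (of_int d * u) + of_int t * (real n * u)"
    by (simp add: algebra_simps)
  finally show ?thesis
    using assms by (metis Ints_add Ints_mult Ints_of_int)
qed

lemma inj_on_tact_lattice:
  assumes n: "n \<ge> 1" and P: "coprime (det P) (int n)"
  shows "inj_on (tact P) (lattice n)"
proof (rule inj_onI)
  fix x y assume x: "x \<in> lattice n" and y: "y \<in> lattice n" and "tact P x = tact P y"
  then have "integer_point (lin P (x - y))"
    by (simp add: tact_eq_tproj_lin tproj_eq_iff lin_diff)
  then have "integer_point (of_int (det P) *\<^sub>R (x - y))"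
    by (rule integer_point_det_scaleR)
  moreover have "integer_point (real n *\<^sub>R (x - y))"
    using integer_point_diff[of "real n *\<^sub>R x" "real n *\<^sub>R y"] x y n
    by (simp add: lattice_iff scaleR_right_diff_distrib)
  ultimately have "integer_point (x - y)"
    using coprime_Ints[OF P] unfolding integer_point_def fst_scaleR snd_scaleR real_scaleR_def
    by blast
  moreover have "\<bar>fst (x - y)\<bar> < 1" "\<bar>snd (x - y)\<bar> < 1"
    using x y n by (auto simp: lattice_iff torus_def)
  ultimately show "x = y"
    using integer_point_eq_0 by (metis eq_iff_diff_eq_0)
qed

lemma bij_betw_tact_lattice:
  assumes "n \<ge> 1" "coprime (det P) (int n)"
  shows "bij_betw (tact P) (lattice n) (lattice n)"
proof -
  have "finite (lattice n)"
    by (rule finite_lattice)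
  moreover have "tact P ` lattice n \<subseteq> lattice n"
    using assms tact_lattice by blast
  ultimately show ?thesis
    using assms inj_on_tact_lattice endo_inj_surj by (metis bij_betw_def)
qed

section \<open>Graph isomorphisms from conjugacy modulo \<open>n\<close>\<close>

lemma digraph_iso_sym: "digraph_iso V E V' E' \<Longrightarrow> digraph_iso V' E' V E"
proof -
  assume "digraph_iso V E V' E'"
  then obtain f where f: "bij_betw f V V'" "\<forall>x\<in>V. \<forall>y\<in>V. (x, y) \<in> E \<longleftrightarrow> (f x, f y) \<in> E'"
    by (auto simp: digraph_iso_def)
  let ?g = "inv_into V f"
  have "bij_betw ?g V' V"
    using f(1) by (rule bij_betw_inv_into)
  moreover have "\<forall>x\<in>V'. \<forall>y\<in>V'. (x, y) \<in> E' \<longleftrightarrow> (?g x, ?g y) \<in> E"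
  proof (intro ballI)
    fix x y assume "x \<in> V'" "y \<in> V'"
    then have "?g x \<in> V" "?g y \<in> V" "f (?g x) = x" "f (?g y) = y"
      using f(1) by (auto simp: bij_betw_def inv_into_into f_inv_into_f)
    then show "(x, y) \<in> E' \<longleftrightarrow> (?g x, ?g y) \<in> E"
      using f(2) by metis
  qed
  ultimately show ?thesis
    unfolding digraph_iso_def by blast
qed

lemma digraph_iso_trans:
  assumes "digraph_iso V E V' E'" "digraph_iso V' E' V'' E''"
  shows "digraph_iso V E V'' E''"
proof -
  obtain f g where f: "bij_betw f V V'" "\<forall>x\<in>V. \<forall>y\<in>V. (x, y) \<in> E \<longleftrightarrow> (f x, f y) \<in> E'"
    and g: "bij_betw g V' V''" "\<forall>x\<in>V'. \<forall>y\<in>V'. (x, y) \<in> E' \<longleftrightarrow> (g x, g y) \<in> E''"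
    using assms by (auto simp: digraph_iso_def)
  have "bij_betw (g \<circ> f) V V''"
    using f(1) g(1) by (rule bij_betw_trans)
  moreover have "\<forall>x\<in>V. \<forall>y\<in>V. (x, y) \<in> E \<longleftrightarrow> ((g \<circ> f) x, (g \<circ> f) y) \<in> E''"
    using f g by (auto simp: bij_betw_def)
  ultimately show ?thesis
    unfolding digraph_iso_def by blast
qed

lemma digraph_iso_card_loops:
  assumes "digraph_iso V E V' E'"
  shows "card {x \<in> V. (x, x) \<in> E} = card {x \<in> V'. (x, x) \<in> E'}"
proof -
  obtain f where f: "bij_betw f V V'" "\<forall>x\<in>V. \<forall>y\<in>V. (x, y) \<in> E \<longleftrightarrow> (f x, f y) \<in> E'"
    using assms by (auto simp: digraph_iso_def)
  then have "bij_betw f {x \<in> V. (x, x) \<in> E} {x \<in> V'. (x, x) \<in> E'}"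
    by (auto simp: bij_betw_def inj_on_def)
  then show ?thesis
    by (rule bij_betw_same_card)
qed

lemma induced_edges_iff: "(x, y) \<in> induced_edges K n \<longleftrightarrow> x \<in> lattice n \<and> y = tact K x"
  unfolding induced_edges_def by blast

lemma same_local_statistics_local_fix_count:
  "same_local_statistics M N n \<Longrightarrow> local_fix_count M n = local_fix_count N n"
  unfolding same_local_statistics_def local_fix_count_def
  by (drule digraph_iso_card_loops) (simp add: induced_edges_iff eq_commute)

definition conj_mod :: "nat \<Rightarrow> int^2^2 \<Rightarrow> int^2^2 \<Rightarrow> bool" where
  "conj_mod n M K \<longleftrightarrow> (\<exists>P. coprime (det P) (int n) \<and> M ** P = P ** K)"

lemma conj_mod_refl: "conj_mod n M M"
  unfolding conj_mod_def by (intro exI[of _ "mat 1"]) (simp add: matrix_mul_lid matrix_mul_rid)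

lemma conj_mod_trans:
  assumes "conj_mod n M K" "conj_mod n K L"
  shows "conj_mod n M L"
proof -
  obtain P Q where P: "coprime (det P) (int n)" "M ** P = P ** K"
    and Q: "coprime (det Q) (int n)" "K ** Q = Q ** L"
    using assms by (auto simp: conj_mod_def)
  have "M ** (P ** Q) = (P ** Q) ** L"
    by (metis P(2) Q(2) matrix_mul_assoc)
  moreover have "coprime (det (P ** Q)) (int n)"
    using P(1) Q(1) by (simp add: det_mul)
  ultimately show ?thesis
    unfolding conj_mod_def by blast
qed

lemma conj_mod_matpow:
  assumes "conj_mod n M K"
  shows "conj_mod n (matpow M m) (matpow K m)"
proof -
  obtain P where P: "coprime (det P) (int n)" "M ** P = P ** K"
    using assms by (auto simp: conj_mod_def)
  have "matpow M m ** P = P ** matpow K m"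
  proof (induction m)
    case 0
    show ?case
      by (simp add: matrix_mul_lid matrix_mul_rid)
  next
    case (Suc m)
    have "matpow M (Suc m) ** P = M ** (matpow M m ** P)"
      by (simp add: matrix_mul_assoc)
    also have "\<dots> = (M ** P) ** matpow K m"
      by (simp add: Suc.IH matrix_mul_assoc)
    also have "\<dots> = P ** matpow K (Suc m)"
      by (simp add: P(2) matrix_mul_assoc)
    finally show ?case .
  qed
  with P(1) show ?thesis
    by (auto simp: conj_mod_def)
qed

lemma conj_mod_digraph_iso:
  assumes n: "n \<ge> 1" and "conj_mod n M K"
  shows "digraph_iso (lattice n) (induced_edges K n) (lattice n) (induced_edges M n)"
proof -
  obtain P where P: "coprime (det P) (int n)" "M ** P = P ** K"
    using assms by (auto simp: conj_mod_def)
  have "(x, y) \<in> induced_edges K n \<longleftrightarrow> (tact P x, tact P y) \<in> induced_edges M n"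
    if "x \<in> lattice n" "y \<in> lattice n" for x y
  proof -
    have "y = tact K x \<longleftrightarrow> tact P y = tact P (tact K x)"
      using inj_on_tact_lattice[OF n P(1)] that(2) tact_lattice[OF n that(1)]
      unfolding inj_on_def by blast
    also have "\<dots> \<longleftrightarrow> tact P y = tact M (tact P x)"
      by (simp add: tact_tact P(2))
    finally show ?thesis
      using that tact_lattice[OF n] by (simp add: induced_edges_iff)
  qed
  then show ?thesis
    using bij_betw_tact_lattice[OF n P(1)] unfolding digraph_iso_def by blast
qed

lemma conj_mod_common_same_local_statistics:
  assumes "n \<ge> 1" "conj_mod n M K" "conj_mod n N K"
  shows "same_local_statistics M N n"
  unfolding same_local_statistics_def
  using assms conj_mod_digraph_iso digraph_iso_sym digraph_iso_trans by metis

section \<open>A normal form for conjugacy modulo \<open>n\<close>\<close>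

lemma coprime_if_no_common_prime_dvd:
  fixes a n :: int
  assumes "n \<noteq> 0" and "\<And>p. prime p \<Longrightarrow> p dvd n \<Longrightarrow> \<not> p dvd a"
  shows "coprime a n"
proof (rule ccontr)
  assume "\<not> coprime a n"
  then have "\<not> is_unit (gcd a n)" "gcd a n \<noteq> 0"
    using assms(1) by (auto simp: is_unit_gcd)
  then obtain p where "prime p" "p dvd gcd a n"
    using prime_divisor_exists by blast
  then show False
    using assms(2) by (meson dvd_trans gcd_dvd1 gcd_dvd2)
qed

lemma prime_dvd_prod_primes_iff:
  fixes p :: int
  assumes "finite S" "\<forall>q\<in>S. prime q" "prime p"
  shows "p dvd \<Prod>S \<longleftrightarrow> p \<in> S"
proof
  assume "p dvd \<Prod>S"
  then obtain q where "q \<in> S" "p dvd q"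
    using prime_dvd_prod_iff[OF assms(1,3), of id] by auto
  then show "p \<in> S"
    using assms(2,3) primes_dvd_imp_eq by metis
next
  show "p \<in> S \<Longrightarrow> p dvd \<Prod>S"
    using dvd_prodI[OF assms(1), of p "\<lambda>x. x"] by simp
qed

text \<open>With \<open>x\<close> the product of the primes of \<open>n\<close> dividing \<open>A\<close> but not \<open>C\<close>, and \<open>y\<close> the
  product of those not dividing \<open>A\<close>, each prime of \<open>n\<close> divides exactly two of the three terms.\<close>
lemma primitive_form_represents_coprime:
  fixes A B C n :: int
  assumes primitive: "gcd A (gcd B C) = 1" and "n \<noteq> 0"
  shows "\<exists>x y. coprime (A * x * x + B * x * y + C * y * y) n"
proof -
  define S where "S = {p. prime p \<and> p dvd n}"
  have "finite S"
    unfolding S_def using \<open>n \<noteq> 0\<close> by (auto intro: finite_subset[OF _ finite_divisors_int])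
  define x where "x = \<Prod>{p\<in>S. p dvd A \<and> \<not> p dvd C}"
  define y where "y = \<Prod>{p\<in>S. \<not> p dvd A}"
  have x: "p dvd x \<longleftrightarrow> p dvd A \<and> \<not> p dvd C" if "p \<in> S" for p
    unfolding x_def using that \<open>finite S\<close>
    by (subst prime_dvd_prod_primes_iff) (auto simp: S_def elim: rev_finite_subset)
  have y: "p dvd y \<longleftrightarrow> \<not> p dvd A" if "p \<in> S" for p
    unfolding y_def using that \<open>finite S\<close>
    by (subst prime_dvd_prod_primes_iff) (auto simp: S_def elim: rev_finite_subset)
  have "coprime (A * x * x + B * x * y + C * y * y) n"
  proof (rule coprime_if_no_common_prime_dvd[OF \<open>n \<noteq> 0\<close>])
    fix p assume p: "prime p" "p dvd n"
    then have "p \<in> S"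
      by (simp add: S_def)
    consider "\<not> p dvd A" | "p dvd A" "\<not> p dvd C" | "p dvd A" "p dvd C"
      by blast
    then show "\<not> p dvd A * x * x + B * x * y + C * y * y"
    proof cases
      case 1
      then have "p dvd y" "\<not> p dvd x"
        using x y \<open>p \<in> S\<close> by auto
      then have "p dvd B * x * y + C * y * y" "\<not> p dvd A * x * x"
        using 1 p(1) by (simp_all add: prime_dvd_mult_iff)
      then show ?thesis
        by (simp add: add.assoc dvd_add_left_iff)
    next
      case 2
      then have "p dvd x" "\<not> p dvd y"
        using x y \<open>p \<in> S\<close> by auto
      then have "p dvd A * x * x + B * x * y" "\<not> p dvd C * y * y"
        using 2 p(1) by (simp_all add: prime_dvd_mult_iff)
      then show ?thesis
        by (simp add: dvd_add_right_iff)
    next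
      case 3
      moreover have "\<not> p dvd B"
        using 3 primitive p(1) by (metis gcd_greatest not_prime_unit)
      moreover have "\<not> p dvd x" "\<not> p dvd y"
        using 3 x y \<open>p \<in> S\<close> by auto
      ultimately have "p dvd A * x * x + C * y * y" "\<not> p dvd B * x * y"
        using p(1) by (simp_all add: prime_dvd_mult_iff)
      then show ?thesis
        by (metis add.commute add.left_commute dvd_add_right_iff)
    qed
  qed
  then show ?thesis
    by blast
qed

lemma mgcd_dvd:
  "mgcd M dvd M$1$2" "mgcd M dvd M$2$1" "mgcd M dvd M$2$2 - M$1$1"
  unfolding mgcd_def by (meson gcd_dvd1 gcd_dvd2 dvd_trans)+

lemma mgcd_eq_0_iff: "mgcd M = 0 \<longleftrightarrow> M = mat2 (M$1$1) 0 0 (M$1$1)"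
  by (auto simp: mgcd_def mat2_eq_iff)

text \<open>For \<open>M = ((a, g\<beta>), (g\<gamma>, a + g\<epsilon>))\<close> the matrix \<open>P = ((x, \<beta>y), (y, \<gamma>x + \<epsilon>y))\<close> satisfies
  \<open>M P = P ((a, g\<beta>\<gamma>), (g, a + g\<epsilon>))\<close>, and \<open>det P\<close> is the primitive form \<open>\<gamma>x\<^sup>2 + \<epsilon>xy - \<beta>y\<^sup>2\<close>.\<close>
lemma conj_mod_normal_form:
  assumes "mgcd M \<noteq> 0" "n \<ge> 1"
  shows "\<exists>e. det (mat2 (M$1$1) (mgcd M * e) (mgcd M) (M$2$2)) = det M
    \<and> conj_mod n M (mat2 (M$1$1) (mgcd M * e) (mgcd M) (M$2$2))"
proof -
  define g where "g = mgcd M"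
  obtain \<beta> \<gamma> \<epsilon> where b: "M$1$2 = g * \<beta>" and c: "M$2$1 = g * \<gamma>" and d: "M$2$2 = M$1$1 + g * \<epsilon>"
    using mgcd_dvd[of M] unfolding g_def by (metis dvdE diff_add_cancel add.commute)
  have "g = gcd (g * \<beta>) (gcd (g * \<gamma>) (g * \<epsilon>))"
    using mgcd_def[of M] unfolding g_def[symmetric] b c d by simp
  also have "\<dots> = g * gcd \<beta> (gcd \<gamma> \<epsilon>)"
    using g_def by (simp add: gcd_mult_left mgcd_def)
  finally have "gcd \<gamma> (gcd \<epsilon> (- \<beta>)) = 1"
    using assms(1) g_def by (simp add: ac_simps)
  then obtain x y where xy: "coprime (\<gamma> * x * x + \<epsilon> * x * y + (- \<beta>) * y * y) (int n)"
    using primitive_form_represents_coprime[of \<gamma> \<epsilon> "- \<beta>" "int n"] assms(2) by auto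
  define P where "P = mat2 x (\<beta> * y) y (\<gamma> * x + \<epsilon> * y)"
  have "det P = \<gamma> * x * x + \<epsilon> * x * y + (- \<beta>) * y * y"
    unfolding P_def det_mat2 by (simp add: algebra_simps)
  moreover have "M ** P = P ** mat2 (M$1$1) (g * (\<beta> * \<gamma>)) g (M$2$2)"
    unfolding P_def mat2_eq_iff matrix_mult_nth2 mat2_nth b c d by (simp add: algebra_simps)
  moreover have "det (mat2 (M$1$1) (g * (\<beta> * \<gamma>)) g (M$2$2)) = det M"
    by (simp add: det_mat2 det_2 b c)
  ultimately show ?thesis
    using xy unfolding conj_mod_def g_def by metis
qed

lemma dvd_diag_diff_if_same_trace_det:
  fixes a d a' d' e e' g :: int
  assumes "g \<noteq> 0" "g dvd d - a" "g dvd d' - a'"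
    and trace: "a + d = a' + d'" and det: "a * d - g * e * g = a' * d' - g * e' * g"
  shows "g dvd a' - a"
proof -
  obtain s s' where s: "d = a + g * s" and s': "d' = a' + g * s'"
    using assms(2,3) by (metis dvdE diff_add_cancel add.commute)
  define k where "k = s' - s"
  have k: "2 * a = 2 * a' + g * k"
    using trace s s' by (simp add: k_def algebra_simps)
  have "g * g * (k * k + 2 * k * s) = g * g * (4 * (e - e'))"
    using det k unfolding s s' k_def by algebra
  then have "k * k = 2 * (2 * (e - e') - k * s)"
    using assms(1) by simp
  then have "even (k * k)"
    by simp
  then obtain j where "k = 2 * j"
    by (auto elim: evenE)
  then have "a' - a = g * (- j)"
    using k by simp
  then show ?thesis
    by (rule dvdI)
qed

text \<open>Normal forms with equal trace and determinant are conjugate by a shear \<open>((1, u), (0, 1))\<close>.\<close>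
lemma conj_mod_normal_forms:
  fixes a d a' d' e e' g :: int
  assumes "g \<noteq> 0" "g dvd d - a" "g dvd d' - a'"
    and trace: "a + d = a' + d'" and det: "a * d - g * e * g = a' * d' - g * e' * g"
  shows "conj_mod n (mat2 a' (g * e') g d') (mat2 a (g * e) g d)"
proof -
  obtain u where "a' - a = g * u"
    using dvd_diag_diff_if_same_trace_det[OF assms] by (rule dvdE)
  then have u: "a' = a + g * u"
    by simp
  then have "g * (a' * u + g * e') = g * (g * e + u * d)"
    using trace det by algebra
  then have "a' * u + g * e' = g * e + u * d"
    using assms(1) by simp
  then have "mat2 a' (g * e') g d' ** mat2 1 u 0 1 = mat2 1 u 0 1 ** mat2 a (g * e) g d"
    using assms(1) u trace by (simp add: mat2_eq_iff matrix_mult_nth2 algebra_simps)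
  then show ?thesis
    unfolding conj_mod_def by (intro exI[of _ "mat2 1 u 0 1"]) (simp add: det_mat2)
qed

lemma conj_mod_common:
  assumes "det M = det N" "trace2 M = trace2 N" "mgcd M = mgcd N" "n \<ge> 1"
  shows "\<exists>K. conj_mod n M K \<and> conj_mod n N K"
proof (cases "mgcd M = 0")
  case True
  then have "M = N"
    using assms(2,3) mgcd_eq_0_iff[of M] mgcd_eq_0_iff[of N]
    by (simp add: trace2_def mat2_eq_iff)
  then show ?thesis
    using conj_mod_refl by blast
next
  case False
  define g where "g = mgcd M"
  obtain e where "det (mat2 (M$1$1) (g * e) g (M$2$2)) = det M"
    and M: "conj_mod n M (mat2 (M$1$1) (g * e) g (M$2$2))"
    using conj_mod_normal_form[OF False assms(4)] unfolding g_def by blast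
  moreover obtain e' where "det (mat2 (N$1$1) (g * e') g (N$2$2)) = det N"
    and N: "conj_mod n N (mat2 (N$1$1) (g * e') g (N$2$2))"
    using conj_mod_normal_form[of N n] False assms(3,4) unfolding g_def by auto
  ultimately have "conj_mod n (mat2 (N$1$1) (g * e') g (N$2$2)) (mat2 (M$1$1) (g * e) g (M$2$2))"
    using False assms mgcd_dvd(3)[of M] mgcd_dvd(3)[of N]
    by (intro conj_mod_normal_forms) (auto simp: g_def det_mat2 trace2_def)
  then show ?thesis
    using M N conj_mod_trans by blast
qed

section \<open>Fixed points of powers on the torus\<close>

fun matpow_coeffs :: "int \<Rightarrow> int \<Rightarrow> nat \<Rightarrow> int \<times> int" where
  "matpow_coeffs T D 0 = (1, 0)"
| "matpow_coeffs T D (Suc m) = (case matpow_coeffs T D m of (\<alpha>, \<beta>) \<Rightarrow> (- D * \<beta>, \<alpha> + T * \<beta>))"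

text \<open>By Cayley--Hamilton, \<open>M\<^sup>m = \<alpha> I + \<beta> M\<close> with coefficients depending only on the trace and
  the determinant of \<open>M\<close>.\<close>
lemma matpow_eq_coeffs:
  assumes "matpow_coeffs (trace2 M) (det M) m = (\<alpha>, \<beta>)"
  shows "matpow M m = mat2 (\<alpha> + \<beta> * M$1$1) (\<beta> * M$1$2) (\<beta> * M$2$1) (\<alpha> + \<beta> * M$2$2)"
  using assms
proof (induction m arbitrary: \<alpha> \<beta>)
  case 0
  then show ?case
    by (simp add: mat2_eq_iff mat1_nth2)
next
  case (Suc m)
  obtain \<alpha>' \<beta>' where c: "matpow_coeffs (trace2 M) (det M) m = (\<alpha>', \<beta>')"
    by fastforce
  then have "\<alpha> = - det M * \<beta>'" "\<beta> = \<alpha>' + trace2 M * \<beta>'"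
    using Suc.prems by simp_all
  then show ?case
    using Suc.IH[OF c] by (simp add: mat2_eq_iff matrix_mult_nth2 trace2_def det_2 algebra_simps)
qed

lemma trace2_matpow_eq:
  assumes "det M = det N" "trace2 M = trace2 N"
  shows "trace2 (matpow M m) = trace2 (matpow N m)"
proof -
  obtain \<alpha> \<beta> where M: "matpow_coeffs (trace2 M) (det M) m = (\<alpha>, \<beta>)"
    by fastforce
  then have N: "matpow_coeffs (trace2 N) (det N) m = (\<alpha>, \<beta>)"
    using assms by simp
  have "trace2 (matpow M m) = 2 * \<alpha> + \<beta> * trace2 M"
    "trace2 (matpow N m) = 2 * \<alpha> + \<beta> * trace2 N"
    using matpow_eq_coeffs[OF M] matpow_eq_coeffs[OF N] by (simp_all add: trace2_def algebra_simps)
  then show ?thesis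
    using assms(2) by simp
qed

lemma det_matpow: "det (matpow M m) = det M ^ m"
  by (induction m) (simp_all add: det_mul det_I)

lemma lin_minus_mat1: "lin (A - mat 1) p = lin A p - p"
  by (simp add: lin_def mat1_nth2 prod_eq_iff algebra_simps)

lemma det_minus_mat1: "det (A - mat 1) = det A - trace2 A + 1"
  by (simp add: det_2 trace2_def mat1_nth2 algebra_simps)

lemma tact_tproj_fixed_iff: "tact A (tproj y) = tproj y \<longleftrightarrow> integer_point (lin (A - mat 1) y)"
  by (simp add: tact_tproj tproj_eq_iff lin_minus_mat1)

lemma lin_kernel_nonzero:
  assumes "det B = 0"
  shows "\<exists>v. v \<noteq> 0 \<and> lin B v = 0"
proof (cases "B$1$1 = 0 \<and> B$1$2 = 0")
  case True
  show ?thesis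
  proof (cases "B$2$1 = 0 \<and> B$2$2 = 0")
    case True
    with \<open>B$1$1 = 0 \<and> B$1$2 = 0\<close> show ?thesis
      by (intro exI[of _ "(1, 0)"]) (simp add: lin_def zero_prod_def)
  next
    case False
    with \<open>B$1$1 = 0 \<and> B$1$2 = 0\<close> show ?thesis
      by (intro exI[of _ "(of_int (B$2$2), - of_int (B$2$1))"])
        (auto simp: lin_def zero_prod_def algebra_simps)
  qed
next
  case False
  have "real_of_int (B$1$1) * of_int (B$2$2) = of_int (B$1$2) * of_int (B$2$1)"
    using assms unfolding det_2 by (metis eq_iff_diff_eq_0 of_int_mult)
  with False show ?thesis
    by (intro exI[of _ "(of_int (B$1$2), - of_int (B$1$1))"])
      (auto simp: lin_def zero_prod_def algebra_simps)
qed

lemma tact_fixed_iff: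
  "x \<in> torus \<Longrightarrow> tact A x = x \<longleftrightarrow> integer_point (lin (A - mat 1) x)"
  using tact_tproj_fixed_iff[of A x] tproj_torus[of x] by simp

text \<open>If \<open>det (A - I) = 0\<close>, every fixed point lies on a line of fixed points.\<close>
lemma isolated_fixed_points_degenerate:
  assumes "det (A - mat 1) = 0"
  shows "isolated_fixed_points A = {}"
proof (rule ccontr)
  assume "isolated_fixed_points A \<noteq> {}"
  then obtain x e where x: "x \<in> torus" "tact A x = x" and "e > 0"
    and isolated: "\<And>y. 0 < dist y x \<Longrightarrow> dist y x < e \<Longrightarrow> tact A (tproj y) \<noteq> tproj y"
    unfolding isolated_fixed_points_def by blast
  obtain v where v: "v \<noteq> 0" "lin (A - mat 1) v = 0"
    using lin_kernel_nonzero[OF assms] by blast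
  define y where "y = x + (e / (2 * norm v)) *\<^sub>R v"
  have "lin (A - mat 1) y = lin (A - mat 1) x"
    by (simp add: y_def lin_add lin_scaleR v(2))
  then have "tact A (tproj y) = tproj y"
    using x tact_fixed_iff tact_tproj_fixed_iff by metis
  moreover have "dist y x = e / 2"
    using v(1) \<open>e > 0\<close> by (simp add: y_def dist_norm)
  ultimately show False
    using isolated \<open>e > 0\<close> by simp
qed

lemma isolated_fixed_points_nondegenerate:
  assumes "det (A - mat 1) = \<delta>" "\<delta> \<noteq> 0"
  shows "isolated_fixed_points A = {x \<in> lattice (nat \<bar>\<delta>\<bar>). tact A x = x}"
proof -
  have n: "nat \<bar>\<delta>\<bar> \<ge> 1"
    using assms(2) by simp
  have "x \<in> lattice (nat \<bar>\<delta>\<bar>)" if "x \<in> torus" "tact A x = x" for x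
    using that n assms(1) tact_fixed_iff integer_point_det_scaleR
      integer_point_of_int_scaleR_abs lattice_iff by metis
  moreover have "\<exists>e>0. \<forall>y. 0 < dist y x \<and> dist y x < e \<longrightarrow> tact A (tproj y) \<noteq> tproj y"
    if "x \<in> torus" "tact A x = x" for x
  proof (intro exI[of _ "1 / \<bar>of_int \<delta>\<bar>"] conjI allI impI notI)
    fix y assume y: "0 < dist y x \<and> dist y x < 1 / \<bar>of_int \<delta>\<bar>" and "tact A (tproj y) = tproj y"
    then have "integer_point (lin (A - mat 1) (y - x))"
      using that tact_fixed_iff tact_tproj_fixed_iff integer_point_diff lin_diff by metis
    then have "integer_point (of_int \<delta> *\<^sub>R (y - x))"
      using assms(1) integer_point_det_scaleR by blast
    moreover have "norm (of_int \<delta> *\<^sub>R (y - x)) = \<bar>of_int \<delta>\<bar> * dist y x"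
      by (subst norm_scaleR) (simp add: dist_norm)
    with y assms(2) have "norm (of_int \<delta> *\<^sub>R (y - x)) < 1"
      by (simp add: field_simps)
    ultimately have "of_int \<delta> *\<^sub>R (y - x) = 0"
      using integer_point_eq_0 abs_fst_le_norm abs_snd_le_norm by (meson le_less_trans)
    then show False
      using y assms(2) by simp
  qed (use assms(2) in simp)
  ultimately show ?thesis
    unfolding isolated_fixed_points_def using n lattice_iff by blast
qed

lemma global_fix_count_eq_local_fix_count:
  "global_fix_count A =
    (let \<delta> = det A - trace2 A + 1 in if \<delta> = 0 then 0 else local_fix_count A (nat \<bar>\<delta>\<bar>))"
  using isolated_fixed_points_degenerate[of A] isolated_fixed_points_nondegenerate[of A]
  by (simp add: Let_def global_fix_count_def local_fix_count_def det_minus_mat1)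

theorem corollary42:
  fixes M N :: "int^2^2"
  assumes "det M = det N" and "trace2 M = trace2 N" and "mgcd M = mgcd N"
  shows "(\<forall>n::nat. n \<ge> 1 \<longrightarrow> same_local_statistics M N n)
       \<and> (\<forall>n::nat. \<forall>m::nat. n \<ge> 1 \<longrightarrow>
             local_fix_count (matpow M m) n = local_fix_count (matpow N m) n)
       \<and> (\<forall>m::nat. global_fix_count (matpow M m) = global_fix_count (matpow N m))"
proof -
  have common: "\<exists>K. conj_mod n M K \<and> conj_mod n N K" if "n \<ge> 1" for n
    using conj_mod_common[OF assms that] .
  have "same_local_statistics M N n" if "n \<ge> 1" for n
    using common[OF that] that conj_mod_common_same_local_statistics by blast
  moreover have local_fix: "local_fix_count (matpow M m) n = local_fix_count (matpow N m) n"
    if "n \<ge> 1" for n m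
    using common[OF that] that conj_mod_matpow conj_mod_common_same_local_statistics
      same_local_statistics_local_fix_count by metis
  moreover have "global_fix_count (matpow M m) = global_fix_count (matpow N m)" for m
  proof -
    have "det (matpow M m) = det (matpow N m)" "trace2 (matpow M m) = trace2 (matpow N m)"
      using assms(1) trace2_matpow_eq[OF assms(1,2)] by (simp_all add: det_matpow)
    moreover have "local_fix_count (matpow M m) (nat \<bar>\<delta>\<bar>) = local_fix_count (matpow N m) (nat \<bar>\<delta>\<bar>)"
      if "\<delta> \<noteq> 0" for \<delta>
      using local_fix that by simp
    ultimately show ?thesis
      unfolding global_fix_count_eq_local_fix_count[of "matpow M m"]
        global_fix_count_eq_local_fix_count[of "matpow N m"] Let_def
      by presburger
  qed
  ultimately show ?thesis
    by blast
qed

end
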